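(* Let $X_1,X_2,Y_1,Y_2,Z_1,Z_2$ be random variables with finite state spaces such that $(X_1,Y_1,Z_1)$ is independent of $(X_2,Y_2,Z_2)$. Put $X=(X_1,X_2)$, $Y=(Y_1,Y_2)$, $Z=(Z_1,Z_2)$. Then $\widetilde{SI}(X:Y;Z)=\widetilde{SI}(X_1:Y_1;Z_1)+\widetilde{SI}(X_2:Y_2;Z_2)$, $\widetilde{CI}(X:Y;Z)=\widetilde{CI}(X_1:Y_1;Z_1)+\widetilde{CI}(X_2:Y_2;Z_2)$, $\widetilde{UI}(X:Y\setminus Z)=\widetilde{UI}(X_1:Y_1\setminus Z_1)+\widetilde{UI}(X_2:Y_2\setminus Z_2)$, $\widetilde{UI}(X:Z\setminus Y)=\widetilde{UI}(X_1:Z_1\setminus Y_1)+\widetilde{UI}(X_2:Z_2\setminus Y_2)$.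
   Context: For any triple of random variables $(X,Y,Z)$ with finite state spaces $\mathcal X,\mathcal Y,\mathcal Z$ and joint distribution $P$, let $\Delta$ be the set of all distributions on $\mathcal X\times\mathcal Y\times\mathcal Z$ and $\Delta_P=\{Q\in\Delta: Q(X=x,Y=y)=P(X=x,Y=y)\text{ and }Q(X=x,Z=z)=P(X=x,Z=z)\ \forall x,y,z\}$; a subscript $Q$ means computed w.r.t. $Q$, no subscript means w.r.t. $P$. $CoI_Q(X;Y;Z)=MI_Q(X:Y)-MI_Q(X:Y|Z)$. Define $\widetilde{UI}(X:Y\setminus Z)=\min_{Q\in\Delta_P}MI_Q(X:Y|Z)$, $\widetilde{UI}(X:Z\setminus Y)=\min_{Q\in\Delta_P}MI_Q(X:Z|Y)$, $\widetilde{SI}(X:Y;Z)=\max_{Q\in\Delta_P}CoI_Q(X;Y;Z)$, $\widetilde{CI}(X:Y;Z)=MI(X:(Y,Z))-\min_{Q\in\Delta_P}MI_Q(X:(Y,Z))$. These definitions are applied to each of the triples $(X_1,Y_1,Z_1)$, $(X_2,Y_2,Z_2)$ and $(X,Y,Z)$ with their respective joint distributions. *)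

theory Defs
  imports Complex_Main
begin

text \<open>A triple (X,Y,Z) with joint distribution Q
  is represented by Q :: x \<times> y \<times> z \<Rightarrow> real.\<close>

definition is_dist :: "('a::finite \<Rightarrow> real) \<Rightarrow> bool" where
  "is_dist p \<longleftrightarrow> (\<forall>a. 0 \<le> p a) \<and> sum p UNIV = 1"

text \<open>Shannon entropy (base 2; terms with p a = 0 vanish since 0 * _ = 0).\<close>
definition ent :: "('a::finite \<Rightarrow> real) \<Rightarrow> real" where
  "ent p = - (\<Sum>a\<in>UNIV. p a * log 2 (p a))"

type_synonym ('x,'y,'z) tdist = "'x \<times> 'y \<times> 'z \<Rightarrow> real"

definition margXY :: "('x::finite,'y::finite,'z::finite) tdist \<Rightarrow> 'x \<times> 'y \<Rightarrow> real" where
  "margXY Q = (\<lambda>(x,y). \<Sum>z\<in>UNIV. Q (x,y,z))"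
definition margXZ :: "('x::finite,'y::finite,'z::finite) tdist \<Rightarrow> 'x \<times> 'z \<Rightarrow> real" where
  "margXZ Q = (\<lambda>(x,z). \<Sum>y\<in>UNIV. Q (x,y,z))"
definition margYZ :: "('x::finite,'y::finite,'z::finite) tdist \<Rightarrow> 'y \<times> 'z \<Rightarrow> real" where
  "margYZ Q = (\<lambda>(y,z). \<Sum>x\<in>UNIV. Q (x,y,z))"
definition margX :: "('x::finite,'y::finite,'z::finite) tdist \<Rightarrow> 'x \<Rightarrow> real" where
  "margX Q = (\<lambda>x. \<Sum>y\<in>UNIV. \<Sum>z\<in>UNIV. Q (x,y,z))"
definition margY :: "('x::finite,'y::finite,'z::finite) tdist \<Rightarrow> 'y \<Rightarrow> real" where
  "margY Q = (\<lambda>y. \<Sum>x\<in>UNIV. \<Sum>z\<in>UNIV. Q (x,y,z))"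
definition margZ :: "('x::finite,'y::finite,'z::finite) tdist \<Rightarrow> 'z \<Rightarrow> real" where
  "margZ Q = (\<lambda>z. \<Sum>x\<in>UNIV. \<Sum>y\<in>UNIV. Q (x,y,z))"

definition MI_XY :: "('x::finite,'y::finite,'z::finite) tdist \<Rightarrow> real" where
  "MI_XY Q = ent (margX Q) + ent (margY Q) - ent (margXY Q)"
definition MI_XY_Z :: "('x::finite,'y::finite,'z::finite) tdist \<Rightarrow> real" where
  "MI_XY_Z Q = ent (margXZ Q) + ent (margYZ Q) - ent Q - ent (margZ Q)"
definition MI_XZ_Y :: "('x::finite,'y::finite,'z::finite) tdist \<Rightarrow> real" where
  "MI_XZ_Y Q = ent (margXY Q) + ent (margYZ Q) - ent Q - ent (margY Q)"
definition MI_X_YZ :: "('x::finite,'y::finite,'z::finite) tdist \<Rightarrow> real" where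
  "MI_X_YZ Q = ent (margX Q) + ent (margYZ Q) - ent Q"
definition CoI :: "('x::finite,'y::finite,'z::finite) tdist \<Rightarrow> real" where
  "CoI Q = MI_XY Q - MI_XY_Z Q"

definition DeltaP :: "('x::finite,'y::finite,'z::finite) tdist \<Rightarrow> ('x,'y,'z) tdist set" where
  "DeltaP P = {Q. is_dist Q \<and> margXY Q = margXY P \<and> margXZ Q = margXZ P}"

text \<open>The minima/maxima exist (compact feasible set, continuous objective); we use Inf/Sup.\<close>
definition UI_Y :: "('x::finite,'y::finite,'z::finite) tdist \<Rightarrow> real" where
  "UI_Y P = Inf (MI_XY_Z ` DeltaP P)"
definition UI_Z :: "('x::finite,'y::finite,'z::finite) tdist \<Rightarrow> real" where
  "UI_Z P = Inf (MI_XZ_Y ` DeltaP P)"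
definition SI :: "('x::finite,'y::finite,'z::finite) tdist \<Rightarrow> real" where
  "SI P = Sup (CoI ` DeltaP P)"
definition CI :: "('x::finite,'y::finite,'z::finite) tdist \<Rightarrow> real" where
  "CI P = MI_X_YZ P - Inf (MI_X_YZ ` DeltaP P)"

text \<open>Joint distribution of X=(X1,X2), Y=(Y1,Y2), Z=(Z1,Z2) when (X1,Y1,Z1) is
  independent of (X2,Y2,Z2) with distributions P1, P2.\<close>
definition prod_dist ::
  "('x1::finite,'y1::finite,'z1::finite) tdist \<Rightarrow> ('x2::finite,'y2::finite,'z2::finite) tdist
   \<Rightarrow> ('x1 \<times> 'x2, 'y1 \<times> 'y2, 'z1 \<times> 'z2) tdist" where
  "prod_dist P1 P2 = (\<lambda>((x1,x2),(y1,y2),(z1,z2)). P1 (x1,y1,z1) * P2 (x2,y2,z2))"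

end

theory Submission
  imports Defs
begin

text \<open>On \<open>DeltaP P\<close> the \<open>(X,Y)\<close>- and \<open>(X,Z)\<close>-marginals are fixed, so
  \<open>MI_Q(X:Y|Z) = MI_Q(X:(Y,Z)) - MI(X:Z)\<close>, \<open>MI_Q(X:Z|Y) = MI_Q(X:(Y,Z)) - MI(X:Y)\<close> and
  \<open>CoI_Q = MI(X:Y) + MI(X:Z) - MI_Q(X:(Y,Z))\<close>: all four measures are affine in
  \<open>m(P) = min\<^bsub>Q \<in> DeltaP P\<^esub> MI_Q(X:(Y,Z))\<close> with coefficients that are additive for independent
  products, and it remains to show that \<open>m\<close> is additive. Products of feasible \<open>Q\<^sub>1\<close>, \<open>Q\<^sub>2\<close> are
  feasible for the product, giving \<open>\<le>\<close>. Conversely, the two component marginals of a feasible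
  \<open>Q\<close> are feasible, and since \<open>X\<^sub>1\<close>, \<open>X\<^sub>2\<close> remain independent under \<open>Q\<close>, three applications of
  strong subadditivity of entropy show that splitting \<open>Q\<close> does not increase \<open>MI(X:(Y,Z))\<close>.\<close>

lemma sum_UNIV_prod:
  "(\<Sum>t\<in>(UNIV::('a::finite \<times> 'b::finite) set). f t) = (\<Sum>a\<in>UNIV. \<Sum>b\<in>UNIV. f (a, b))"
  by (simp add: sum.cartesian_product UNIV_Times_UNIV[symmetric] del: UNIV_Times_UNIV)

definition pushforward :: "('a::finite \<Rightarrow> 'k) \<Rightarrow> ('a \<Rightarrow> real) \<Rightarrow> 'k \<Rightarrow> real" where
  "pushforward K Q k = (\<Sum>a\<in>UNIV. if K a = k then Q a else 0)"

definition entropy_of :: "('a::finite \<Rightarrow> real) \<Rightarrow> ('a \<Rightarrow> 'k) \<Rightarrow> real" where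
  "entropy_of Q K = - (\<Sum>a\<in>UNIV. Q a * log 2 (pushforward K Q (K a)))"

lemma sum_pushforward:
  "(\<Sum>k\<in>(UNIV::'k::finite set). pushforward K Q k * g k) = (\<Sum>a\<in>UNIV. Q a * g (K a))"
proof -
  have "(\<Sum>k\<in>(UNIV::'k set). pushforward K Q k * g k)
      = (\<Sum>k\<in>(UNIV::'k set). \<Sum>a\<in>UNIV. if K a = k then Q a * g (K a) else 0)"
    unfolding pushforward_def sum_distrib_right by (intro sum.cong refl) auto
  also have "\<dots> = (\<Sum>a\<in>UNIV. \<Sum>k\<in>(UNIV::'k set). if K a = k then Q a * g (K a) else 0)"
    by (rule sum.swap)
  finally show ?thesis by simp
qed

lemma ent_pushforward: "ent (pushforward K Q :: 'k::finite \<Rightarrow> real) = entropy_of Q K"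
  unfolding ent_def entropy_of_def using sum_pushforward[of K Q "\<lambda>k. log 2 (pushforward K Q k)"]
  by simp

lemma is_dist_pushforward: "is_dist Q \<Longrightarrow> is_dist (pushforward K Q :: 'k::finite \<Rightarrow> real)"
  unfolding is_dist_def using sum_pushforward[of K Q "\<lambda>_. 1"]
  by (auto simp: pushforward_def intro: sum_nonneg)

lemma pushforward_ge: "(\<And>b. 0 \<le> Q b) \<Longrightarrow> Q a \<le> pushforward K Q (K a)"
  unfolding pushforward_def
  using member_le_sum[of a UNIV "\<lambda>b. if K b = K a then Q b else 0"] by (simp add: if_split_mem2)

lemma pushforward_comp:
  "pushforward L (pushforward K Q :: 'k::finite \<Rightarrow> real) = pushforward (\<lambda>a. L (K a)) Q"
proof
  fix l
  have "pushforward L (pushforward K Q) l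
      = (\<Sum>k\<in>(UNIV::'k set). pushforward K Q k * (if L k = l then 1 else 0))"
    unfolding pushforward_def[of L] by (rule sum.cong) auto
  then show "pushforward L (pushforward K Q) l = pushforward (\<lambda>a. L (K a)) Q l"
    unfolding sum_pushforward by (simp add: pushforward_def if_distrib cong: if_cong)
qed

lemma entropy_of_cong: "(\<And>a b. K a = K b \<longleftrightarrow> L a = L b) \<Longrightarrow> entropy_of Q K = entropy_of Q L"
  unfolding entropy_of_def pushforward_def
  by (intro arg_cong[where f=uminus] sum.cong refl) (auto cong: if_cong)

lemma ent_eq_entropy_of_id: "ent Q = entropy_of Q (\<lambda>a. a)"
proof -
  have "pushforward (\<lambda>a. a) Q = Q" by (auto simp: pushforward_def)
  then show ?thesis using ent_pushforward[of "\<lambda>a. a" Q] by simp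
qed

lemma entropy_of_const: "is_dist Q \<Longrightarrow> entropy_of Q (\<lambda>a. c) = 0"
  unfolding entropy_of_def pushforward_def is_dist_def by simp

lemma sum_if_zero: "(\<Sum>b\<in>A. if P then f b else 0) = (if P then sum f A else (0::real))"
  by simp

lemma if_conj_zero: "(if P \<and> R then c else 0) = (if P then if R then c else 0 else (0::real))"
  by simp

lemma margXY_eq_pushforward: "margXY Q = pushforward (\<lambda>(x, y, z). (x, y)) Q"
  by (rule ext) (auto simp: margXY_def pushforward_def sum_UNIV_prod sum_if_zero if_conj_zero)
lemma margXZ_eq_pushforward: "margXZ Q = pushforward (\<lambda>(x, y, z). (x, z)) Q"
  by (rule ext) (auto simp: margXZ_def pushforward_def sum_UNIV_prod sum_if_zero if_conj_zero)
lemma margYZ_eq_pushforward: "margYZ Q = pushforward (\<lambda>(x, y, z). (y, z)) Q"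
  by (rule ext) (auto simp: margYZ_def pushforward_def sum_UNIV_prod sum_if_zero if_conj_zero)
lemma margX_eq_pushforward: "margX Q = pushforward (\<lambda>(x, y, z). x) Q"
  by (rule ext) (auto simp: margX_def pushforward_def sum_UNIV_prod sum_if_zero if_conj_zero)
lemma margY_eq_pushforward: "margY Q = pushforward (\<lambda>(x, y, z). y) Q"
  by (rule ext) (auto simp: margY_def pushforward_def sum_UNIV_prod sum_if_zero if_conj_zero)
lemma margZ_eq_pushforward: "margZ Q = pushforward (\<lambda>(x, y, z). z) Q"
  by (rule ext) (auto simp: margZ_def pushforward_def sum_UNIV_prod sum_if_zero if_conj_zero)

lemma margX_eq_pushforward_margXY: "margX Q = pushforward fst (margXY Q)"
  unfolding margX_eq_pushforward margXY_eq_pushforward pushforward_comp by (simp add: split_def)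
lemma margY_eq_pushforward_margXY: "margY Q = pushforward snd (margXY Q)"
  unfolding margY_eq_pushforward margXY_eq_pushforward pushforward_comp by (simp add: split_def)
lemma margZ_eq_pushforward_margXZ: "margZ Q = pushforward snd (margXZ Q)"
  unfolding margZ_eq_pushforward margXZ_eq_pushforward pushforward_comp by (simp add: split_def)

lemma mult_log_ratio_ge:
  fixes r u v w :: real
  assumes "0 \<le> r" "r \<le> u" "r \<le> v" "u \<le> w"
  shows "(r - u * v / w) / ln 2 \<le> r * (log 2 r + log 2 w - log 2 u - log 2 v)"
proof (cases "r = 0")
  case True
  then show ?thesis using assms by (simp add: divide_nonpos_pos)
next
  case False
  then have pos: "0 < r" "0 < u" "0 < v" "0 < w" using assms by auto
  define x where "x = r * w / (u * v)"
  have "0 < x" using pos by (simp add: x_def)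
  have "1 - 1 / x \<le> ln x"
    using ln_le_minus_one[of "1 / x"] \<open>0 < x\<close> by (simp add: ln_div)
  then have "r - u * v / w \<le> r * ln x"
    using mult_left_mono[of "1 - 1 / x" "ln x" r] pos by (simp add: x_def field_simps)
  moreover have "log 2 r + log 2 w - log 2 u - log 2 v = ln x / ln 2"
    using pos by (simp add: x_def log_def ln_div ln_mult diff_divide_distrib add_divide_distrib)
  ultimately show ?thesis by (simp add: divide_right_mono)
qed

lemma sum_UNIV_triple:
  "(\<Sum>t\<in>(UNIV::('a::finite \<times> 'b::finite \<times> 'c::finite) set). f t)
    = (\<Sum>a\<in>UNIV. \<Sum>b\<in>UNIV. \<Sum>c\<in>UNIV. f (a, b, c))"
  by (simp add: sum_UNIV_prod)

text \<open>The Markov chain \<open>X - Y - Z\<close> with the same \<open>(X,Y)\<close>- and \<open>(Y,Z)\<close>-marginals as \<open>R\<close> is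
  again a distribution; where \<open>margY R b = 0\<close> both marginals vanish, so division by zero is harmless.\<close>
lemma sum_markov_chain_eq_1:
  fixes R :: "('a::finite, 'b::finite, 'c::finite) tdist"
  assumes "is_dist R"
  shows "(\<Sum>a\<in>UNIV. \<Sum>b\<in>UNIV. \<Sum>c\<in>UNIV. margXY R (a, b) * margYZ R (b, c) / margY R b) = 1"
proof -
  have sum_margXY: "(\<Sum>a\<in>UNIV. margXY R (a, b)) = margY R b" for b
    by (simp add: margXY_def margY_def)
  have sum_margYZ: "(\<Sum>c\<in>UNIV. margYZ R (b, c)) = margY R b" for b
    by (simp add: margYZ_def margY_def, rule sum.swap)
  have "(\<Sum>a\<in>UNIV. \<Sum>b\<in>UNIV. \<Sum>c\<in>UNIV. margXY R (a, b) * margYZ R (b, c) / margY R b)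
      = (\<Sum>b\<in>UNIV. (\<Sum>a\<in>UNIV. margXY R (a, b)) * (\<Sum>c\<in>UNIV. margYZ R (b, c)) / margY R b)"
    by (subst sum.swap) (simp add: sum_product sum_divide_distrib)
  also have "\<dots> = (\<Sum>b\<in>UNIV. margY R b)"
    unfolding sum_margXY sum_margYZ by (rule sum.cong) auto
  also have "\<dots> = sum R UNIV"
    unfolding margY_def sum_UNIV_triple by (rule sum.swap)
  finally show ?thesis using assms by (simp add: is_dist_def)
qed

text \<open>Gibbs' inequality between \<open>R\<close> and that Markov chain, via \<open>ln x \<ge> 1 - 1/x\<close> pointwise.\<close>
theorem ent_strong_subadditivity:
  fixes R :: "('a::finite, 'b::finite, 'c::finite) tdist"
  assumes "is_dist R"
  shows "ent R + ent (margY R) \<le> ent (margXY R) + ent (margYZ R)"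
proof -
  have nonneg: "\<And>t. 0 \<le> R t" and sum_R: "sum R UNIV = 1"
    using assms by (auto simp: is_dist_def)
  let ?mXY = "margXY R" and ?mYZ = "margYZ R" and ?mY = "margY R"
  have "ent R = - (\<Sum>a\<in>UNIV. \<Sum>b\<in>UNIV. \<Sum>c\<in>UNIV. R (a, b, c) * log 2 (R (a, b, c)))"
    by (simp add: ent_def sum_UNIV_triple)
  moreover have "ent ?mXY = - (\<Sum>a\<in>UNIV. \<Sum>b\<in>UNIV. \<Sum>c\<in>UNIV. R (a, b, c) * log 2 (?mXY (a, b)))"
    unfolding margXY_eq_pushforward ent_pushforward entropy_of_def by (simp add: sum_UNIV_triple)
  moreover have "ent ?mYZ = - (\<Sum>a\<in>UNIV. \<Sum>b\<in>UNIV. \<Sum>c\<in>UNIV. R (a, b, c) * log 2 (?mYZ (b, c)))"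
    unfolding margYZ_eq_pushforward ent_pushforward entropy_of_def by (simp add: sum_UNIV_triple)
  moreover have "ent ?mY = - (\<Sum>a\<in>UNIV. \<Sum>b\<in>UNIV. \<Sum>c\<in>UNIV. R (a, b, c) * log 2 (?mY b))"
    unfolding margY_eq_pushforward ent_pushforward entropy_of_def by (simp add: sum_UNIV_triple)
  moreover have "(\<Sum>a\<in>UNIV. \<Sum>b\<in>UNIV. \<Sum>c\<in>UNIV. (R (a, b, c) - ?mXY (a, b) * ?mYZ (b, c) / ?mY b) / ln 2)
      \<le> (\<Sum>a\<in>UNIV. \<Sum>b\<in>UNIV. \<Sum>c\<in>UNIV. R (a, b, c) *
           (log 2 (R (a, b, c)) + log 2 (?mY b) - log 2 (?mXY (a, b)) - log 2 (?mYZ (b, c))))"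
  proof (intro sum_mono mult_log_ratio_ge nonneg)
    fix a b c
    show "R (a, b, c) \<le> ?mXY (a, b)"
      unfolding margXY_def using nonneg member_le_sum[of c UNIV "\<lambda>z. R (a, b, z)"] by simp
    show "R (a, b, c) \<le> ?mYZ (b, c)"
      unfolding margYZ_def using nonneg member_le_sum[of a UNIV "\<lambda>x. R (x, b, c)"] by simp
    show "?mXY (a, b) \<le> ?mY b"
      unfolding margXY_def margY_def
      using nonneg member_le_sum[of a UNIV "\<lambda>x. \<Sum>z\<in>UNIV. R (x, b, z)"] by (simp add: sum_nonneg)
  qed
  moreover have "(\<Sum>a\<in>UNIV. \<Sum>b\<in>UNIV. \<Sum>c\<in>UNIV. (R (a, b, c) - ?mXY (a, b) * ?mYZ (b, c) / ?mY b) / ln 2) = 0"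
    using sum_R sum_markov_chain_eq_1[OF assms]
    by (simp add: sum_divide_distrib[symmetric] sum_subtractf sum_UNIV_triple)
  ultimately show ?thesis
    by (simp add: sum_subtractf sum.distrib algebra_simps)
qed

lemma entropy_of_strong_subadditivity:
  fixes f :: "'a::finite \<Rightarrow> 'b::finite" and g :: "'a \<Rightarrow> 'c::finite" and h :: "'a \<Rightarrow> 'd::finite"
  assumes "is_dist Q"
  shows "entropy_of Q (\<lambda>a. (f a, g a, h a)) + entropy_of Q g
    \<le> entropy_of Q (\<lambda>a. (f a, g a)) + entropy_of Q (\<lambda>a. (g a, h a))"
  using ent_strong_subadditivity[OF is_dist_pushforward[OF assms, of "\<lambda>a. (f a, g a, h a)"]]
  by (simp add: margXY_eq_pushforward margYZ_eq_pushforward margY_eq_pushforward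
      pushforward_comp ent_pushforward)

lemma entropy_of_subadditive:
  fixes f :: "'a::finite \<Rightarrow> 'b::finite" and h :: "'a \<Rightarrow> 'd::finite"
  assumes "is_dist Q"
  shows "entropy_of Q (\<lambda>a. (f a, h a)) \<le> entropy_of Q f + entropy_of Q h"
proof -
  have "entropy_of Q (\<lambda>a. (f a, (), h a)) + entropy_of Q (\<lambda>a. ())
      \<le> entropy_of Q (\<lambda>a. (f a, ())) + entropy_of Q (\<lambda>a. ((), h a))"
    by (rule entropy_of_strong_subadditivity[OF assms])
  moreover have "entropy_of Q (\<lambda>a. (f a, (), h a)) = entropy_of Q (\<lambda>a. (f a, h a))"
    and "entropy_of Q (\<lambda>a. (f a, ())) = entropy_of Q f"
    and "entropy_of Q (\<lambda>a. ((), h a)) = entropy_of Q h"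
    by (auto intro: entropy_of_cong)
  ultimately show ?thesis using entropy_of_const[OF assms, of "()"] by linarith
qed

definition pmf_pair :: "('a::finite \<Rightarrow> real) \<Rightarrow> ('b::finite \<Rightarrow> real) \<Rightarrow> 'a \<times> 'b \<Rightarrow> real" where
  "pmf_pair Q1 Q2 = (\<lambda>(a, b). Q1 a * Q2 b)"

lemma is_dist_pmf_pair: "is_dist Q1 \<Longrightarrow> is_dist Q2 \<Longrightarrow> is_dist (pmf_pair Q1 Q2)"
  unfolding is_dist_def pmf_pair_def by (auto simp: sum_UNIV_prod sum_product[symmetric])

lemma pushforward_pmf_pair:
  "pushforward (\<lambda>(a, b). (K1 a, K2 b)) (pmf_pair Q1 Q2) (k1, k2)
    = pushforward K1 Q1 k1 * pushforward K2 Q2 k2"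
proof -
  have "pushforward (\<lambda>(a, b). (K1 a, K2 b)) (pmf_pair Q1 Q2) (k1, k2)
      = (\<Sum>a\<in>UNIV. \<Sum>b\<in>UNIV. (if K1 a = k1 then Q1 a else 0) * (if K2 b = k2 then Q2 b else 0))"
    unfolding pushforward_def pmf_pair_def sum_UNIV_prod by (intro sum.cong refl) auto
  then show ?thesis by (simp add: pushforward_def sum_product)
qed

lemma pushforward_fst_pmf_pair: "is_dist Q2 \<Longrightarrow> pushforward fst (pmf_pair Q1 Q2) = Q1"
  using pushforward_pmf_pair[of "\<lambda>a. a" "\<lambda>b. ()" Q1 Q2]
  by (simp add: fun_eq_iff pushforward_def is_dist_def split_def)

lemma pushforward_snd_pmf_pair: "is_dist Q1 \<Longrightarrow> pushforward snd (pmf_pair Q1 Q2) = Q2"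
  using pushforward_pmf_pair[of "\<lambda>a. ()" "\<lambda>b. b" Q1 Q2]
  by (simp add: fun_eq_iff pushforward_def is_dist_def split_def)

lemma entropy_of_pmf_pair:
  assumes "is_dist Q1" "is_dist Q2"
  shows "entropy_of (pmf_pair Q1 Q2) (\<lambda>(a, b). (K1 a, K2 b)) = entropy_of Q1 K1 + entropy_of Q2 K2"
proof -
  have nonneg1: "\<And>a. 0 \<le> Q1 a" and nonneg2: "\<And>b. 0 \<le> Q2 b"
    and sum1: "sum Q1 UNIV = 1" and sum2: "sum Q2 UNIV = 1"
    using assms by (auto simp: is_dist_def)
  have pointwise: "pmf_pair Q1 Q2 (a, b) * log 2 (pushforward K1 Q1 (K1 a) * pushforward K2 Q2 (K2 b))
      = Q1 a * log 2 (pushforward K1 Q1 (K1 a)) * Q2 b + Q2 b * log 2 (pushforward K2 Q2 (K2 b)) * Q1 a"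
    for a b
  proof (cases "Q1 a = 0 \<or> Q2 b = 0")
    case True
    then show ?thesis by (auto simp: pmf_pair_def)
  next
    case False
    then have "0 < Q1 a" "0 < Q2 b" using nonneg1 nonneg2 by (auto simp: order_le_less)
    then have "0 < pushforward K1 Q1 (K1 a)" "0 < pushforward K2 Q2 (K2 b)"
      using pushforward_ge[of Q1 a K1, OF nonneg1] pushforward_ge[of Q2 b K2, OF nonneg2] by auto
    then show ?thesis by (simp add: log_mult_pos pmf_pair_def algebra_simps)
  qed
  have "entropy_of (pmf_pair Q1 Q2) (\<lambda>(a, b). (K1 a, K2 b)) = - (\<Sum>a\<in>UNIV. \<Sum>b\<in>UNIV.
      Q1 a * log 2 (pushforward K1 Q1 (K1 a)) * Q2 b + Q2 b * log 2 (pushforward K2 Q2 (K2 b)) * Q1 a)"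
    unfolding entropy_of_def sum_UNIV_prod by (simp add: pushforward_pmf_pair pointwise)
  also have "\<dots> = entropy_of Q1 K1 + entropy_of Q2 K2"
    unfolding entropy_of_def sum.distrib
    by (simp add: sum_distrib_left[symmetric] sum_distrib_right[symmetric] sum1 sum2)
  finally show ?thesis .
qed

definition regroup :: "('x1 \<times> 'y1 \<times> 'z1) \<times> ('x2 \<times> 'y2 \<times> 'z2) \<Rightarrow> ('x1 \<times> 'x2) \<times> ('y1 \<times> 'y2) \<times> ('z1 \<times> 'z2)"
  where "regroup = (\<lambda>((x1, y1, z1), (x2, y2, z2)). ((x1, x2), (y1, y2), (z1, z2)))"

lemma prod_dist_eq_pushforward:
  fixes Q1 :: "('x1::finite, 'y1::finite, 'z1::finite) tdist"
    and Q2 :: "('x2::finite, 'y2::finite, 'z2::finite) tdist"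
  shows "prod_dist Q1 Q2 = pushforward regroup (pmf_pair Q1 Q2)"
proof
  fix s :: "('x1 \<times> 'x2) \<times> ('y1 \<times> 'y2) \<times> ('z1 \<times> 'z2)"
  obtain x1 x2 y1 y2 z1 z2 where s: "s = ((x1, x2), (y1, y2), (z1, z2))"
    by (metis prod.exhaust)
  have "regroup t = s \<longleftrightarrow> t = ((x1, y1, z1), (x2, y2, z2))" for t
    by (auto simp: s regroup_def split: prod.splits)
  then show "prod_dist Q1 Q2 s = pushforward regroup (pmf_pair Q1 Q2) s"
    unfolding pushforward_def by (simp add: s prod_dist_def pmf_pair_def)
qed

lemma is_dist_prod_dist: "is_dist Q1 \<Longrightarrow> is_dist Q2 \<Longrightarrow> is_dist (prod_dist Q1 Q2)"
  unfolding prod_dist_eq_pushforward by (intro is_dist_pushforward is_dist_pmf_pair)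

text \<open>The last hypothesis says that \<open>L\<close> is computed separately on the two independent triples.\<close>
lemma entropy_of_prod_dist:
  fixes L :: "('x1::finite \<times> 'x2::finite) \<times> ('y1::finite \<times> 'y2::finite) \<times> ('z1::finite \<times> 'z2::finite) \<Rightarrow> 'k::finite"
  assumes "is_dist Q1" "is_dist Q2"
    and "\<And>a b. L (regroup a) = L (regroup b) \<longleftrightarrow> K1 (fst a) = K1 (fst b) \<and> K2 (snd a) = K2 (snd b)"
  shows "entropy_of (prod_dist Q1 Q2) L = entropy_of Q1 K1 + entropy_of Q2 K2"
proof -
  have "entropy_of (prod_dist Q1 Q2) L = entropy_of (pmf_pair Q1 Q2) (\<lambda>a. L (regroup a))"
    unfolding prod_dist_eq_pushforward ent_pushforward[symmetric] pushforward_comp ..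
  also have "\<dots> = entropy_of (pmf_pair Q1 Q2) (\<lambda>(a, b). (K1 a, K2 b))"
    by (rule entropy_of_cong) (auto simp: assms(3) split: prod.splits)
  finally show ?thesis using entropy_of_pmf_pair[OF assms(1,2)] by simp
qed

definition MI_XZ :: "('x::finite, 'y::finite, 'z::finite) tdist \<Rightarrow> real" where
  "MI_XZ Q = ent (margX Q) + ent (margZ Q) - ent (margXZ Q)"

context
  fixes P1 :: "('x1::finite, 'y1::finite, 'z1::finite) tdist"
    and P2 :: "('x2::finite, 'y2::finite, 'z2::finite) tdist"
  assumes dist1: "is_dist P1" and dist2: "is_dist P2"
begin

lemma ent_margX_prod_dist: "ent (margX (prod_dist P1 P2)) = ent (margX P1) + ent (margX P2)"
  unfolding margX_eq_pushforward ent_pushforward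
  by (rule entropy_of_prod_dist[OF dist1 dist2]) (auto simp: regroup_def split: prod.splits)
lemma ent_margY_prod_dist: "ent (margY (prod_dist P1 P2)) = ent (margY P1) + ent (margY P2)"
  unfolding margY_eq_pushforward ent_pushforward
  by (rule entropy_of_prod_dist[OF dist1 dist2]) (auto simp: regroup_def split: prod.splits)
lemma ent_margZ_prod_dist: "ent (margZ (prod_dist P1 P2)) = ent (margZ P1) + ent (margZ P2)"
  unfolding margZ_eq_pushforward ent_pushforward
  by (rule entropy_of_prod_dist[OF dist1 dist2]) (auto simp: regroup_def split: prod.splits)
lemma ent_margXY_prod_dist: "ent (margXY (prod_dist P1 P2)) = ent (margXY P1) + ent (margXY P2)"
  unfolding margXY_eq_pushforward ent_pushforward
  by (rule entropy_of_prod_dist[OF dist1 dist2]) (auto simp: regroup_def split: prod.splits)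
lemma ent_margXZ_prod_dist: "ent (margXZ (prod_dist P1 P2)) = ent (margXZ P1) + ent (margXZ P2)"
  unfolding margXZ_eq_pushforward ent_pushforward
  by (rule entropy_of_prod_dist[OF dist1 dist2]) (auto simp: regroup_def split: prod.splits)
lemma ent_margYZ_prod_dist: "ent (margYZ (prod_dist P1 P2)) = ent (margYZ P1) + ent (margYZ P2)"
  unfolding margYZ_eq_pushforward ent_pushforward
  by (rule entropy_of_prod_dist[OF dist1 dist2]) (auto simp: regroup_def split: prod.splits)
lemma ent_prod_dist: "ent (prod_dist P1 P2) = ent P1 + ent P2"
  unfolding ent_eq_entropy_of_id
  by (rule entropy_of_prod_dist[OF dist1 dist2]) (auto simp: regroup_def split: prod.splits)

lemma MI_XY_prod_dist: "MI_XY (prod_dist P1 P2) = MI_XY P1 + MI_XY P2"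
  by (simp add: MI_XY_def ent_margX_prod_dist ent_margY_prod_dist ent_margXY_prod_dist)

lemma MI_XZ_prod_dist: "MI_XZ (prod_dist P1 P2) = MI_XZ P1 + MI_XZ P2"
  by (simp add: MI_XZ_def ent_margX_prod_dist ent_margZ_prod_dist ent_margXZ_prod_dist)

lemma MI_X_YZ_prod_dist: "MI_X_YZ (prod_dist P1 P2) = MI_X_YZ P1 + MI_X_YZ P2"
  by (simp add: MI_X_YZ_def ent_margX_prod_dist ent_margYZ_prod_dist ent_prod_dist)

end

lemma DeltaP_self: "is_dist P \<Longrightarrow> P \<in> DeltaP P"
  by (simp add: DeltaP_def)

lemma DeltaP_single_marginals:
  assumes "Q \<in> DeltaP P"
  shows "margX Q = margX P" "margY Q = margY P" "margZ Q = margZ P"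
  using assms unfolding DeltaP_def
  by (simp_all add: margX_eq_pushforward_margXY margY_eq_pushforward_margXY margZ_eq_pushforward_margXZ)

lemma DeltaP_MI_identities:
  assumes "Q \<in> DeltaP P"
  shows "MI_XY_Z Q = MI_X_YZ Q - MI_XZ P"
    and "MI_XZ_Y Q = MI_X_YZ Q - MI_XY P"
    and "CoI Q = MI_XY P + MI_XZ P - MI_X_YZ Q"
  using assms DeltaP_single_marginals[OF assms] unfolding DeltaP_def
  by (simp_all add: MI_XY_Z_def MI_X_YZ_def MI_XZ_def MI_XZ_Y_def MI_XY_def CoI_def)

lemma MI_X_YZ_nonneg: "is_dist Q \<Longrightarrow> 0 \<le> MI_X_YZ Q"
proof -
  assume "is_dist Q"
  have "entropy_of Q (\<lambda>a. a) = entropy_of Q (\<lambda>a. ((\<lambda>(x, y, z). x) a, (\<lambda>(x, y, z). (y, z)) a))"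
    by (rule entropy_of_cong) (auto split: prod.splits)
  then show ?thesis
    using entropy_of_subadditive[OF \<open>is_dist Q\<close>, of "\<lambda>(x, y, z). x" "\<lambda>(x, y, z). (y, z)"]
    unfolding MI_X_YZ_def margX_eq_pushforward margYZ_eq_pushforward ent_pushforward
      ent_eq_entropy_of_id[of Q]
    by simp
qed

lemma cInf_image_minus_const:
  fixes S :: "real set"
  assumes "S \<noteq> {}" "bdd_below S"
  shows "Inf ((\<lambda>t. t - c) ` S) = Inf S - c"
proof (rule antisym)
  have "bdd_below ((\<lambda>t. t - c) ` S)"
    using assms(2) unfolding bdd_below_def by (auto intro: diff_right_mono)
  then have "Inf ((\<lambda>t. t - c) ` S) + c \<le> Inf S"
    by (intro cInf_greatest[OF assms(1)]) (simp add: cInf_lower le_diff_eq[symmetric])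
  then show "Inf ((\<lambda>t. t - c) ` S) \<le> Inf S - c" by simp
  show "Inf S - c \<le> Inf ((\<lambda>t. t - c) ` S)"
    using assms by (auto intro!: cInf_greatest cInf_lower)
qed

lemma cSup_image_const_minus:
  fixes S :: "real set"
  assumes "S \<noteq> {}" "bdd_below S"
  shows "Sup ((\<lambda>t. c - t) ` S) = c - Inf S"
proof (rule antisym)
  show "Sup ((\<lambda>t. c - t) ` S) \<le> c - Inf S"
    using assms by (auto intro!: cSup_least cInf_lower)
  have "bdd_above ((\<lambda>t. c - t) ` S)"
    using assms(2) unfolding bdd_below_def bdd_above_def by (auto intro: diff_left_mono)
  then have "c - s \<le> Sup ((\<lambda>t. c - t) ` S)" if "s \<in> S" for s
    using that by (intro cSup_upper) auto
  then have "c - Sup ((\<lambda>t. c - t) ` S) \<le> Inf S"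
    by (intro cInf_greatest[OF assms(1)]) (simp add: algebra_simps)
  then show "c - Inf S \<le> Sup ((\<lambda>t. c - t) ` S)" by simp
qed

definition min_MI_X_YZ :: "('x::finite, 'y::finite, 'z::finite) tdist \<Rightarrow> real" where
  "min_MI_X_YZ P = Inf (MI_X_YZ ` DeltaP P)"

lemma bdd_below_MI_X_YZ_DeltaP: "bdd_below (MI_X_YZ ` DeltaP P)"
  by (rule bdd_belowI[where m=0]) (auto simp: DeltaP_def MI_X_YZ_nonneg)

lemma min_MI_X_YZ_le: "Q \<in> DeltaP P \<Longrightarrow> min_MI_X_YZ P \<le> MI_X_YZ Q"
  unfolding min_MI_X_YZ_def by (intro cInf_lower bdd_below_MI_X_YZ_DeltaP) auto

lemma UI_SI_CI_eq_min_MI_X_YZ: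
  assumes "is_dist P"
  shows "UI_Y P = min_MI_X_YZ P - MI_XZ P"
    and "UI_Z P = min_MI_X_YZ P - MI_XY P"
    and "SI P = MI_XY P + MI_XZ P - min_MI_X_YZ P"
    and "CI P = MI_X_YZ P - min_MI_X_YZ P"
proof -
  note Inf_shift = cInf_image_minus_const[OF _ bdd_below_MI_X_YZ_DeltaP]
  have nonempty: "MI_X_YZ ` DeltaP P \<noteq> {}" using DeltaP_self[OF assms] by auto
  have "MI_XY_Z ` DeltaP P = (\<lambda>t. t - MI_XZ P) ` MI_X_YZ ` DeltaP P"
    unfolding image_image by (rule image_cong) (auto simp: DeltaP_MI_identities)
  then show "UI_Y P = min_MI_X_YZ P - MI_XZ P"
    unfolding UI_Y_def min_MI_X_YZ_def using Inf_shift[OF nonempty] by simp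
  have "MI_XZ_Y ` DeltaP P = (\<lambda>t. t - MI_XY P) ` MI_X_YZ ` DeltaP P"
    unfolding image_image by (rule image_cong) (auto simp: DeltaP_MI_identities)
  then show "UI_Z P = min_MI_X_YZ P - MI_XY P"
    unfolding UI_Z_def min_MI_X_YZ_def using Inf_shift[OF nonempty] by simp
  have "CoI ` DeltaP P = (\<lambda>t. MI_XY P + MI_XZ P - t) ` MI_X_YZ ` DeltaP P"
    unfolding image_image by (rule image_cong) (auto simp: DeltaP_MI_identities)
  then show "SI P = MI_XY P + MI_XZ P - min_MI_X_YZ P"
    unfolding SI_def min_MI_X_YZ_def
    using cSup_image_const_minus[OF nonempty bdd_below_MI_X_YZ_DeltaP] by simp
  show "CI P = MI_X_YZ P - min_MI_X_YZ P"
    unfolding CI_def min_MI_X_YZ_def ..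
qed

lemma margXY_prod_dist:
  "margXY (prod_dist Q1 Q2) = (\<lambda>(x, y). margXY Q1 (fst x, fst y) * margXY Q2 (snd x, snd y))"
  by (rule ext) (auto simp: margXY_def prod_dist_def sum_UNIV_prod sum_product split: prod.splits)
lemma margXZ_prod_dist:
  "margXZ (prod_dist Q1 Q2) = (\<lambda>(x, z). margXZ Q1 (fst x, fst z) * margXZ Q2 (snd x, snd z))"
  by (rule ext) (auto simp: margXZ_def prod_dist_def sum_UNIV_prod sum_product split: prod.splits)

lemma prod_dist_in_DeltaP:
  "Q1 \<in> DeltaP P1 \<Longrightarrow> Q2 \<in> DeltaP P2 \<Longrightarrow> prod_dist Q1 Q2 \<in> DeltaP (prod_dist P1 P2)"
  by (simp add: DeltaP_def is_dist_prod_dist margXY_prod_dist margXZ_prod_dist)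

definition proj1 :: "('x1 \<times> 'x2) \<times> ('y1 \<times> 'y2) \<times> ('z1 \<times> 'z2) \<Rightarrow> 'x1 \<times> 'y1 \<times> 'z1" where
  "proj1 = (\<lambda>(x, y, z). (fst x, fst y, fst z))"
definition proj2 :: "('x1 \<times> 'x2) \<times> ('y1 \<times> 'y2) \<times> ('z1 \<times> 'z2) \<Rightarrow> 'x2 \<times> 'y2 \<times> 'z2" where
  "proj2 = (\<lambda>(x, y, z). (snd x, snd y, snd z))"

lemma pushforward_proj1_prod_dist: "is_dist P2 \<Longrightarrow> pushforward proj1 (prod_dist P1 P2) = P1"
proof -
  assume "is_dist P2"
  have "(\<lambda>a. proj1 (regroup a)) = fst" by (auto simp: proj1_def regroup_def)
  then show ?thesis
    unfolding prod_dist_eq_pushforward pushforward_comp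
    using pushforward_fst_pmf_pair[OF \<open>is_dist P2\<close>] by metis
qed

lemma pushforward_proj2_prod_dist: "is_dist P1 \<Longrightarrow> pushforward proj2 (prod_dist P1 P2) = P2"
proof -
  assume "is_dist P1"
  have "(\<lambda>a. proj2 (regroup a)) = snd" by (auto simp: proj2_def regroup_def)
  then show ?thesis
    unfolding prod_dist_eq_pushforward pushforward_comp
    using pushforward_snd_pmf_pair[OF \<open>is_dist P1\<close>] by metis
qed

lemma pushforward_proj1_in_DeltaP:
  assumes "Q \<in> DeltaP (prod_dist P1 P2)" "is_dist P2"
  shows "pushforward proj1 Q \<in> DeltaP P1"
proof -
  have XY: "margXY (pushforward proj1 R) = pushforward (\<lambda>(x, y). (fst x, fst y)) (margXY R)"
    and XZ: "margXZ (pushforward proj1 R) = pushforward (\<lambda>(x, z). (fst x, fst z)) (margXZ R)" for R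
    by (simp_all add: margXY_eq_pushforward margXZ_eq_pushforward pushforward_comp proj1_def split_def)
  have "margXY (pushforward proj1 Q) = margXY (pushforward proj1 (prod_dist P1 P2))"
    and "margXZ (pushforward proj1 Q) = margXZ (pushforward proj1 (prod_dist P1 P2))"
    using assms(1) unfolding XY XZ DeltaP_def by simp_all
  then show ?thesis
    using assms unfolding DeltaP_def pushforward_proj1_prod_dist[OF assms(2)]
    by (auto intro: is_dist_pushforward)
qed

lemma pushforward_proj2_in_DeltaP:
  assumes "Q \<in> DeltaP (prod_dist P1 P2)" "is_dist P1"
  shows "pushforward proj2 Q \<in> DeltaP P2"
proof -
  have XY: "margXY (pushforward proj2 R) = pushforward (\<lambda>(x, y). (snd x, snd y)) (margXY R)"
    and XZ: "margXZ (pushforward proj2 R) = pushforward (\<lambda>(x, z). (snd x, snd z)) (margXZ R)" for R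
    by (simp_all add: margXY_eq_pushforward margXZ_eq_pushforward pushforward_comp proj2_def split_def)
  have "margXY (pushforward proj2 Q) = margXY (pushforward proj2 (prod_dist P1 P2))"
    and "margXZ (pushforward proj2 Q) = margXZ (pushforward proj2 (prod_dist P1 P2))"
    using assms(1) unfolding XY XZ DeltaP_def by simp_all
  then show ?thesis
    using assms unfolding DeltaP_def pushforward_proj2_prod_dist[OF assms(2)]
    by (auto intro: is_dist_pushforward)
qed

text \<open>The sum of three instances of strong subadditivity, conditioning on \<open>(W\<^sub>1,W\<^sub>2)\<close>,
  \<open>W\<^sub>1\<close> and \<open>W\<^sub>2\<close>.\<close>
lemma entropy_of_two_pairs_le:
  fixes x1 :: "'a::finite \<Rightarrow> 'b::finite" and x2 :: "'a \<Rightarrow> 'c::finite"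
    and w1 :: "'a \<Rightarrow> 'd::finite" and w2 :: "'a \<Rightarrow> 'e::finite"
  assumes "is_dist Q"
  shows "entropy_of Q (\<lambda>a. (x1 a, x2 a, w1 a, w2 a)) + entropy_of Q w1 + entropy_of Q w2
    \<le> entropy_of Q (\<lambda>a. (x1 a, w1 a)) + entropy_of Q (\<lambda>a. (x2 a, w2 a))
      + entropy_of Q (\<lambda>a. (w1 a, w2 a))"
proof -
  let ?w = "\<lambda>a. (w1 a, w2 a)"
  have "entropy_of Q (\<lambda>a. (x1 a, ?w a, x2 a)) + entropy_of Q ?w
      \<le> entropy_of Q (\<lambda>a. (x1 a, ?w a)) + entropy_of Q (\<lambda>a. (?w a, x2 a))"
    and "entropy_of Q (\<lambda>a. (x1 a, w1 a, w2 a)) + entropy_of Q w1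
      \<le> entropy_of Q (\<lambda>a. (x1 a, w1 a)) + entropy_of Q (\<lambda>a. (w1 a, w2 a))"
    and "entropy_of Q (\<lambda>a. (x2 a, w2 a, w1 a)) + entropy_of Q w2
      \<le> entropy_of Q (\<lambda>a. (x2 a, w2 a)) + entropy_of Q (\<lambda>a. (w2 a, w1 a))"
    by (rule entropy_of_strong_subadditivity[OF assms])+
  moreover have "entropy_of Q (\<lambda>a. (x1 a, ?w a, x2 a)) = entropy_of Q (\<lambda>a. (x1 a, x2 a, w1 a, w2 a))"
    and "entropy_of Q (\<lambda>a. (x1 a, ?w a)) = entropy_of Q (\<lambda>a. (x1 a, w1 a, w2 a))"
    and "entropy_of Q (\<lambda>a. (?w a, x2 a)) = entropy_of Q (\<lambda>a. (x2 a, w2 a, w1 a))"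
    and "entropy_of Q (\<lambda>a. (w2 a, w1 a)) = entropy_of Q ?w"
    by (auto intro: entropy_of_cong)
  ultimately show ?thesis by linarith
qed

text \<open>Hypothesis \<open>indep_X\<close> is the independence of \<open>X\<^sub>1\<close> and \<open>X\<^sub>2\<close> under \<open>Q\<close>, in entropy form.\<close>
lemma MI_X_YZ_proj_le:
  fixes Q :: "('x1::finite \<times> 'x2::finite, 'y1::finite \<times> 'y2::finite, 'z1::finite \<times> 'z2::finite) tdist"
  assumes "is_dist Q"
    and indep_X: "ent (margX Q) = ent (margX (pushforward proj1 Q)) + ent (margX (pushforward proj2 Q))"
  shows "MI_X_YZ (pushforward proj1 Q) + MI_X_YZ (pushforward proj2 Q) \<le> MI_X_YZ Q"
proof -
  let ?x1 = "\<lambda>(x, y, z). fst x" and ?x2 = "\<lambda>(x, y, z). snd x"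
  let ?w1 = "\<lambda>(x, y, z). (fst y, fst z)" and ?w2 = "\<lambda>(x, y, z). (snd y, snd z)"
  have "ent Q = entropy_of Q (\<lambda>a. (?x1 a, ?x2 a, ?w1 a, ?w2 a))"
    unfolding ent_eq_entropy_of_id by (rule entropy_of_cong) (auto split: prod.splits)
  moreover have "ent (pushforward proj1 Q) = entropy_of Q (\<lambda>a. (?x1 a, ?w1 a))"
    and "ent (pushforward proj2 Q) = entropy_of Q (\<lambda>a. (?x2 a, ?w2 a))"
    unfolding ent_pushforward by (auto intro: entropy_of_cong simp: proj1_def proj2_def split: prod.splits)
  moreover have "ent (margYZ (pushforward proj1 Q)) = entropy_of Q ?w1"
    and "ent (margYZ (pushforward proj2 Q)) = entropy_of Q ?w2"
    and "ent (margYZ Q) = entropy_of Q (\<lambda>a. (?w1 a, ?w2 a))"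
    unfolding margYZ_eq_pushforward pushforward_comp ent_pushforward
    by (auto intro: entropy_of_cong simp: proj1_def proj2_def split: prod.splits)
  ultimately show ?thesis
    using indep_X entropy_of_two_pairs_le[OF assms(1), of ?x1 ?x2 ?w1 ?w2]
    unfolding MI_X_YZ_def by linarith
qed

lemma le_cInf_add_cInf:
  fixes A B :: "real set"
  assumes "A \<noteq> {}" "B \<noteq> {}" "\<And>a b. a \<in> A \<Longrightarrow> b \<in> B \<Longrightarrow> c \<le> a + b"
  shows "c \<le> Inf A + Inf B"
proof -
  have "c - a \<le> Inf B" if "a \<in> A" for a
    using assms(3)[OF that] by (intro cInf_greatest[OF assms(2)]) (simp add: algebra_simps)
  then have "c - Inf B \<le> Inf A"
    by (intro cInf_greatest[OF assms(1)]) (simp add: algebra_simps)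
  then show ?thesis by simp
qed

lemma min_MI_X_YZ_prod_dist:
  assumes dist1: "is_dist P1" and dist2: "is_dist P2"
  shows "min_MI_X_YZ (prod_dist P1 P2) = min_MI_X_YZ P1 + min_MI_X_YZ P2"
proof (rule antisym)
  show "min_MI_X_YZ (prod_dist P1 P2) \<le> min_MI_X_YZ P1 + min_MI_X_YZ P2"
    unfolding min_MI_X_YZ_def[of P1] min_MI_X_YZ_def[of P2]
  proof (rule le_cInf_add_cInf)
    show "MI_X_YZ ` DeltaP P1 \<noteq> {}" "MI_X_YZ ` DeltaP P2 \<noteq> {}"
      using DeltaP_self dist1 dist2 by auto
    fix a b assume "a \<in> MI_X_YZ ` DeltaP P1" "b \<in> MI_X_YZ ` DeltaP P2"
    then obtain Q1 Q2 where Q: "Q1 \<in> DeltaP P1" "Q2 \<in> DeltaP P2" and "a = MI_X_YZ Q1" "b = MI_X_YZ Q2"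
      by blast
    moreover have "is_dist Q1" "is_dist Q2" using Q by (auto simp: DeltaP_def)
    ultimately show "min_MI_X_YZ (prod_dist P1 P2) \<le> a + b"
      using min_MI_X_YZ_le[OF prod_dist_in_DeltaP[OF Q]] MI_X_YZ_prod_dist[of Q1 Q2] by simp
  qed
  show "min_MI_X_YZ P1 + min_MI_X_YZ P2 \<le> min_MI_X_YZ (prod_dist P1 P2)"
    unfolding min_MI_X_YZ_def[of "prod_dist P1 P2"]
  proof (rule cInf_greatest)
    show "MI_X_YZ ` DeltaP (prod_dist P1 P2) \<noteq> {}"
      using DeltaP_self is_dist_prod_dist[OF dist1 dist2] by auto
    fix t assume "t \<in> MI_X_YZ ` DeltaP (prod_dist P1 P2)"
    then obtain Q where Q: "Q \<in> DeltaP (prod_dist P1 P2)" and t: "t = MI_X_YZ Q" by blast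
    have Q1: "pushforward proj1 Q \<in> DeltaP P1" and Q2: "pushforward proj2 Q \<in> DeltaP P2"
      using pushforward_proj1_in_DeltaP[OF Q dist2] pushforward_proj2_in_DeltaP[OF Q dist1] .
    have "is_dist Q" using Q by (simp add: DeltaP_def)
    moreover have "ent (margX Q) = ent (margX (pushforward proj1 Q)) + ent (margX (pushforward proj2 Q))"
      using ent_margX_prod_dist[OF dist1 dist2]
      by (simp add: DeltaP_single_marginals[OF Q] DeltaP_single_marginals[OF Q1]
          DeltaP_single_marginals[OF Q2])
    ultimately show "min_MI_X_YZ P1 + min_MI_X_YZ P2 \<le> t"
      using MI_X_YZ_proj_le min_MI_X_YZ_le[OF Q1] min_MI_X_YZ_le[OF Q2] t by fastforce
  qed
qed

theorem mainTheorem14: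
  fixes P1 :: "('x1::finite, 'y1::finite, 'z1::finite) tdist"
    and P2 :: "('x2::finite, 'y2::finite, 'z2::finite) tdist"
  assumes "is_dist P1" and "is_dist P2"
  shows "SI (prod_dist P1 P2) = SI P1 + SI P2
    \<and> CI (prod_dist P1 P2) = CI P1 + CI P2
    \<and> UI_Y (prod_dist P1 P2) = UI_Y P1 + UI_Y P2
    \<and> UI_Z (prod_dist P1 P2) = UI_Z P1 + UI_Z P2"
  using UI_SI_CI_eq_min_MI_X_YZ[OF assms(1)] UI_SI_CI_eq_min_MI_X_YZ[OF assms(2)]
    UI_SI_CI_eq_min_MI_X_YZ[OF is_dist_prod_dist[OF assms]]
    min_MI_X_YZ_prod_dist[OF assms] MI_XY_prod_dist[OF assms] MI_XZ_prod_dist[OF assms]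
    MI_X_YZ_prod_dist[OF assms]
  by simp

end
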